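(* Let $\alpha\in(0,1)$, and let $\mathcal E=(N,\{a_1,a_2\},\vec\sigma)$ be an election with two alternatives. Partition $N$ into four sets according to the agents' preferences: $N_1$ ($a_1\succ a_2$), $N_2$ ($a_2\succ a_1$), $N_3$ ($a_1\succ\!\!\succ a_2$) and $N_4$ ($a_2\succ\!\!\succ a_1$). Define two placements on the real line, each with distance $d(x,y)=|x-y|$. - Placement $d_1$: $a_1$ at $0$; $N_3$ at $2$; $N_1$ at $\frac1\alpha+1$; $N_2$ at $\frac2\alpha$; $a_2$ and $N_4$ at $\frac2\alpha+2$. - Placement $d_2$: $a_1$ at $0$; $N_3$ at $2$; $N_1$ at $\frac1\alpha+1$; $a_2$ and $N_4$ at $\frac2\alpha+2$; $N_2$ at $\frac2\alpha+2+\frac{2\alpha+2}{1-\alpha}$. Then, for the distortion restricted to 1-Euclidean metrics, $$\mathsf{dist}_\alpha(a_1,\mathcal E)=\max\left(\frac{\mathrm{sc}_{d_1}(a_1)}{\mathrm{sc}_{d_1}(a_2)},\ \frac{\mathrm{sc}_{d_2}(a_1)}{\mathrm{sc}_{d_2}(a_2)},\ 1\right).$$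
   Context: Each agent $i$ reports $\sigma_i=(\pi_i,\Join_i)$, a ranking of the two alternatives together with $\Join_i(1)\in\{\succ,\succ\!\!\succ\}$. The profile is $\alpha$-consistent with $d$ (mandatory elicitation) if: - whenever agent $i$ reports $x\succ y$, we have $d(i,y)\ge d(i,x)>\alpha d(i,y)$; - whenever agent $i$ reports $x\succ\!\!\succ y$, we have $d(i,x)\le\alpha d(i,y)$. Here $\mathrm{sc}_d(a)=\sum_{i\in N}d(i,a)$. The 1-Euclidean distortion is $\mathsf{dist}_\alpha(a,\mathcal E)=\sup_d \mathrm{sc}_d(a)/\min_b\mathrm{sc}_d(b)$, where the supremum ranges over metrics $d(x,y)=|x-y|$ induced by placing all agents and alternatives on $\mathbb R$ with which the profile is $\alpha$-consistent. A ratio with zero denominator and positive numerator is read as $+\infty$. *)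

theory Defs
  imports Complex_Main "HOL-Library.Extended_Real"
begin

datatype alt = A1 | A2

fun other :: "alt \<Rightarrow> alt" where
  "other A1 = A2" | "other A2 = A1"

datatype strength = Weak | Strong

text \<open>A report: the top-ranked alternative together with the strength of the
  comparison (Weak = succ, Strong = succ-succ).\<close>
type_synonym report = "alt \<times> strength"

definition edist :: "('i \<Rightarrow> real) \<Rightarrow> (alt \<Rightarrow> real) \<Rightarrow> 'i \<Rightarrow> alt \<Rightarrow> real" where
  "edist q p i a = \<bar>q i - p a\<bar>"

definition consistent ::
  "real \<Rightarrow> 'i set \<Rightarrow> ('i \<Rightarrow> report) \<Rightarrow> ('i \<Rightarrow> real) \<Rightarrow> (alt \<Rightarrow> real) \<Rightarrow> bool" where
  "consistent \<alpha> N \<sigma> q p \<longleftrightarrow>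
     (\<forall>i\<in>N. let x = fst (\<sigma> i); y = other x in
        (snd (\<sigma> i) = Weak \<longrightarrow>
           edist q p i y \<ge> edist q p i x \<and> edist q p i x > \<alpha> * edist q p i y) \<and>
        (snd (\<sigma> i) = Strong \<longrightarrow> edist q p i x \<le> \<alpha> * edist q p i y))"

definition sc :: "'i set \<Rightarrow> ('i \<Rightarrow> real) \<Rightarrow> (alt \<Rightarrow> real) \<Rightarrow> alt \<Rightarrow> real" where
  "sc N q p a = (\<Sum>i\<in>N. edist q p i a)"

text \<open>Ratio in the extended reals: positive / 0 = +infinity; 0/0 read as 1.\<close>
definition ratio :: "real \<Rightarrow> real \<Rightarrow> ereal" where
  "ratio x y = (if y = 0 then (if x > 0 then \<infinity> else 1) else ereal (x / y))"

definition distortion :: "real \<Rightarrow> 'i set \<Rightarrow> ('i \<Rightarrow> report) \<Rightarrow> alt \<Rightarrow> ereal" where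
  "distortion \<alpha> N \<sigma> a =
     (SUP qp \<in> {(q, p). consistent \<alpha> N \<sigma> q p}.
        ratio (sc N (fst qp) (snd qp) a) (min (sc N (fst qp) (snd qp) A1) (sc N (fst qp) (snd qp) A2)))"

definition altpos1 :: "real \<Rightarrow> alt \<Rightarrow> real" where
  "altpos1 \<alpha> a = (case a of A1 \<Rightarrow> 0 | A2 \<Rightarrow> 2/\<alpha> + 2)"

definition agpos1 :: "real \<Rightarrow> ('i \<Rightarrow> report) \<Rightarrow> 'i \<Rightarrow> real" where
  "agpos1 \<alpha> \<sigma> i = (case \<sigma> i of
       (A1, Weak) \<Rightarrow> 1/\<alpha> + 1
     | (A2, Weak) \<Rightarrow> 2/\<alpha>
     | (A1, Strong) \<Rightarrow> 2
     | (A2, Strong) \<Rightarrow> 2/\<alpha> + 2)"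

definition altpos2 :: "real \<Rightarrow> alt \<Rightarrow> real" where
  "altpos2 \<alpha> a = (case a of A1 \<Rightarrow> 0 | A2 \<Rightarrow> 2/\<alpha> + 2)"

definition agpos2 :: "real \<Rightarrow> ('i \<Rightarrow> report) \<Rightarrow> 'i \<Rightarrow> real" where
  "agpos2 \<alpha> \<sigma> i = (case \<sigma> i of
       (A1, Weak) \<Rightarrow> 1/\<alpha> + 1
     | (A2, Weak) \<Rightarrow> 2/\<alpha> + 2 + (2*\<alpha> + 2) / (1 - \<alpha>)
     | (A1, Strong) \<Rightarrow> 2
     | (A2, Strong) \<Rightarrow> 2/\<alpha> + 2)"

end

theory Submission
  imports Defs
begin

(* Write u, v for an agent's distances to a1, a2 and L for the distance between the alternatives,
   and let rho be the (finite) right-hand side. Among the positions compatible with an agent's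
   report, u - rho v relative to L is largest at the agent's position in d1 if rho alpha >= 1 and in
   d2 if rho alpha <= 1; the two placements differ only on N2. Summing over the agents gives
   sc(a1) <= rho sc(a2) for every consistent metric, hence the upper bound. Conversely, d1 and d2
   are limits of consistent metrics (only N2 sits on the boundary of its strict constraint), so
   their ratios, and 1, are lower bounds. *)

lemma abs_diff_collinear:
  fixes x a b :: real
  shows "\<bar>a - b\<bar> = \<bar>x - a\<bar> + \<bar>x - b\<bar> \<or> \<bar>a - b\<bar> = \<bar>\<bar>x - a\<bar> - \<bar>x - b\<bar>\<bar>"
  by linarith

(* In each, c (u - rho v) <= L e,
   where up to a common positive factor c is the distance 2/alpha + 2 between the alternatives in
   the extremal placement and e is its value of d(i,a1) - rho d(i,a2). *)
lemma A1_Weak_bound: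
  fixes u v L \<rho> :: real
  assumes "0 \<le> u" "u \<le> v" "1 \<le> \<rho>" "L = u + v \<or> L = \<bar>u - v\<bar>"
  shows "2 * (u - \<rho> * v) \<le> L * (1 - \<rho>)"
proof -
  have scaled: "(1 + \<rho>) * u \<le> (1 + \<rho>) * v" using assms by (simp add: mult_left_mono)
  consider "L = u + v" | "L = v - u" using assms by linarith
  then show ?thesis
  proof cases
    case 1
    show ?thesis unfolding 1 using scaled by (simp add: algebra_simps)
  next
    case 2
    have "u \<le> \<rho> * u" using mult_right_mono[of 1 \<rho> u] assms by simp
    then show ?thesis unfolding 2 using scaled by (simp add: algebra_simps)
  qed
qed

lemma A1_Strong_bound:
  fixes u v L \<alpha> \<rho> :: real
  assumes "0 \<le> u" "0 \<le> v" "0 \<le> \<alpha>" "\<alpha> \<le> 1" "u \<le> \<alpha> * v" "1 \<le> \<rho>"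
    "L = u + v \<or> L = \<bar>u - v\<bar>"
  shows "(1 + \<alpha>) * (u - \<rho> * v) \<le> L * (\<alpha> - \<rho>)"
proof -
  have scaled: "(1 + \<rho>) * u \<le> (1 + \<rho>) * (\<alpha> * v)" using assms by (simp add: mult_left_mono)
  have "\<alpha> * v \<le> v" using assms by (simp add: mult_left_le_one_le)
  then consider "L = u + v" | "L = v - u" using assms by linarith
  then show ?thesis
  proof cases
    case 1
    show ?thesis unfolding 1 using scaled by (simp add: algebra_simps)
  next
    case 2
    have "\<alpha> * u \<le> \<rho> * u" using mult_right_mono[of \<alpha> \<rho> u] assms by simp
    then show ?thesis unfolding 2 using scaled by (simp add: algebra_simps)
  qed
qed

lemma A2_Weak_bound_ge:
  fixes u v L \<alpha> \<rho> :: real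
  assumes "0 \<le> \<alpha>" "\<alpha> < 1" "0 \<le> v" "v \<le> u" "\<alpha> * u < v" "1 \<le> \<rho>" "1 \<le> \<rho> * \<alpha>"
    "L = u + v \<or> L = \<bar>u - v\<bar>"
  shows "(1 + \<alpha>) * (u - \<rho> * v) \<le> L * (1 - \<rho> * \<alpha>)"
proof -
  have bound: "(u - \<rho> * v) * (1 - \<alpha>) \<le> (u - v) * (1 - \<rho> * \<alpha>)"
    using mult_left_mono[of "\<alpha> * u" v "\<rho> - 1"] assms by (simp add: algebra_simps)
  consider "L = u + v" | "L = u - v" using assms by linarith
  then show ?thesis
  proof cases
    case 1
    then show ?thesis using mult_left_mono[of "\<alpha> * u" v "1 + \<rho>"] assms by (simp add: algebra_simps)
  next
    case 2
    have "(u - v) * (1 - \<rho> * \<alpha>) \<le> 0" using assms by (simp add: mult_nonneg_nonpos)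
    then have "u - \<rho> * v \<le> 0"
      using bound assms mult_pos_pos[of "u - \<rho> * v" "1 - \<alpha>"] by linarith
    then have "(1 + \<alpha>) * (u - \<rho> * v) \<le> (1 - \<alpha>) * (u - \<rho> * v)"
      using assms by (simp add: mult_right_mono_neg)
    then show ?thesis
      unfolding 2 using bound \<open>(u - v) * (1 - \<rho> * \<alpha>) \<le> 0\<close> by (simp add: algebra_simps)
  qed
qed

lemma A2_Weak_bound_le:
  fixes u v L \<alpha> \<rho> :: real
  assumes "0 \<le> \<alpha>" "\<alpha> < 1" "0 \<le> v" "v \<le> u" "\<alpha> * u < v" "1 \<le> \<rho>" "\<rho> * \<alpha> \<le> 1"
    "L = u + v \<or> L = \<bar>u - v\<bar>"
  shows "(1 - \<alpha>) * (u - \<rho> * v) \<le> L * (1 - \<rho> * \<alpha>)"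
proof -
  have bound: "(u - \<rho> * v) * (1 + \<alpha>) \<le> (u + v) * (1 - \<rho> * \<alpha>)"
    using mult_left_mono[of "\<alpha> * u" v "1 + \<rho>"] assms by (simp add: algebra_simps)
  consider "L = u + v" | "L = u - v" using assms by linarith
  then show ?thesis
  proof cases
    case 1
    have "(u - \<rho> * v) * (1 - \<alpha>) \<le> max 0 ((u - \<rho> * v) * (1 + \<alpha>))"
      using assms by (cases "0 \<le> u - \<rho> * v") (auto simp: mult_left_mono mult_nonpos_nonneg)
    moreover have "0 \<le> (u + v) * (1 - \<rho> * \<alpha>)" using assms by simp
    ultimately show ?thesis using 1 bound by (simp add: algebra_simps)
  next
    case 2
    show ?thesis
      unfolding 2 using mult_left_mono[of "\<alpha> * u" v "\<rho> - 1"] assms by (simp add: algebra_simps)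
  qed
qed

lemma rescale_le:
  fixes c X L e k D E :: real
  assumes "c * X \<le> L * e" "0 \<le> k" "k * c = D" "k * e = E"
  shows "D * X \<le> L * E"
  using mult_left_mono[OF assms(1,2)] assms(3,4) by (simp add: algebra_simps)

(* u and v are the distances to A1 and A2. *)
definition fits_report :: "real \<Rightarrow> report \<Rightarrow> real \<Rightarrow> real \<Rightarrow> bool" where
  "fits_report \<alpha> r u v = (case r of
       (A1, Weak) \<Rightarrow> u \<le> v \<and> \<alpha> * v < u
     | (A1, Strong) \<Rightarrow> u \<le> \<alpha> * v
     | (A2, Weak) \<Rightarrow> v \<le> u \<and> \<alpha> * u < v
     | (A2, Strong) \<Rightarrow> v \<le> \<alpha> * u)"

lemma consistent_iff_fits_report:
  "consistent \<alpha> N \<sigma> q p \<longleftrightarrow> (\<forall>i\<in>N. fits_report \<alpha> (\<sigma> i) (edist q p i A1) (edist q p i A2))"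
proof -
  have "(let x = fst r; y = other x in
          (snd r = Weak \<longrightarrow> d y \<ge> d x \<and> d x > \<alpha> * d y) \<and> (snd r = Strong \<longrightarrow> d x \<le> \<alpha> * d y))
        \<longleftrightarrow> fits_report \<alpha> r (d A1) (d A2)" for r and d :: "alt \<Rightarrow> real"
    by (cases r; rename_tac x s; case_tac x; case_tac s) (auto simp: fits_report_def)
  then show ?thesis unfolding consistent_def by blast
qed

lemma edist_placement1:
  assumes "0 < \<alpha>" "\<alpha> < 1"
  shows "(edist (agpos1 \<alpha> \<sigma>) (altpos1 \<alpha>) i A1, edist (agpos1 \<alpha> \<sigma>) (altpos1 \<alpha>) i A2) =
    (case \<sigma> i of
       (A1, Weak) \<Rightarrow> (1/\<alpha> + 1, 1/\<alpha> + 1)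
     | (A1, Strong) \<Rightarrow> (2, 2/\<alpha>)
     | (A2, Weak) \<Rightarrow> (2/\<alpha>, 2)
     | (A2, Strong) \<Rightarrow> (2/\<alpha> + 2, 0))"
proof -
  have "1 < 1/\<alpha>" using assms by simp
  then have "\<bar>1/\<alpha> + 1 - (2/\<alpha> + 2)\<bar> = 1/\<alpha> + 1" by linarith
  with assms show ?thesis
    by (cases "\<sigma> i"; rename_tac x s; case_tac x; case_tac s) (auto simp: edist_def agpos1_def altpos1_def)
qed

lemma edist_placement2_N2:
  assumes "0 < \<alpha>" "\<alpha> < 1" "\<sigma> i = (A2, Weak)"
  shows "edist (agpos2 \<alpha> \<sigma>) (altpos2 \<alpha>) i A1 = (2/\<alpha> + 2) / (1 - \<alpha>)"
    and "edist (agpos2 \<alpha> \<sigma>) (altpos2 \<alpha>) i A2 = \<alpha> * ((2/\<alpha> + 2) / (1 - \<alpha>))"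
proof -
  have "0 < 2/\<alpha>" "0 < (2 * \<alpha> + 2) / (1 - \<alpha>)" using assms by simp_all
  then show "edist (agpos2 \<alpha> \<sigma>) (altpos2 \<alpha>) i A1 = (2/\<alpha> + 2) / (1 - \<alpha>)"
    and "edist (agpos2 \<alpha> \<sigma>) (altpos2 \<alpha>) i A2 = \<alpha> * ((2/\<alpha> + 2) / (1 - \<alpha>))"
    using assms by (auto simp: edist_def agpos2_def altpos2_def field_simps)
qed

lemma edist_placement2_not_N2:
  "\<sigma> i \<noteq> (A2, Weak) \<Longrightarrow> edist (agpos2 \<alpha> \<sigma>) (altpos2 \<alpha>) i a = edist (agpos1 \<alpha> \<sigma>) (altpos1 \<alpha>) i a"
  by (cases "\<sigma> i"; rename_tac x s; case_tac x; case_tac s)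
     (auto simp: edist_def agpos1_def agpos2_def altpos1_def altpos2_def)

lemma agent_bound_not_N2:
  fixes u v L \<rho> :: real
  assumes "0 < \<alpha>" "\<alpha> < 1" "1 \<le> \<rho>" "\<sigma> i \<noteq> (A2, Weak)" "fits_report \<alpha> (\<sigma> i) u v"
    "0 \<le> u" "0 \<le> v" "L = u + v \<or> L = \<bar>u - v\<bar>"
  shows "(2/\<alpha> + 2) * (u - \<rho> * v) \<le>
    L * (edist (agpos1 \<alpha> \<sigma>) (altpos1 \<alpha>) i A1 - \<rho> * edist (agpos1 \<alpha> \<sigma>) (altpos1 \<alpha>) i A2)"
proof -
  define u' v' where "u' = edist (agpos1 \<alpha> \<sigma>) (altpos1 \<alpha>) i A1"
    and "v' = edist (agpos1 \<alpha> \<sigma>) (altpos1 \<alpha>) i A2"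
  have dist: "(u', v') = (case \<sigma> i of
       (A1, Weak) \<Rightarrow> (1/\<alpha> + 1, 1/\<alpha> + 1)
     | (A1, Strong) \<Rightarrow> (2, 2/\<alpha>)
     | (A2, Weak) \<Rightarrow> (2/\<alpha>, 2)
     | (A2, Strong) \<Rightarrow> (2/\<alpha> + 2, 0))"
    unfolding u'_def v'_def by (rule edist_placement1[OF assms(1,2)])
  obtain x s where r: "\<sigma> i = (x, s)" by fastforce
  have "(2/\<alpha> + 2) * (u - \<rho> * v) \<le> L * (u' - \<rho> * v')"
  proof (cases x; cases s)
    assume case_r: "x = A1" "s = Weak"
    have uv': "u' = 1/\<alpha> + 1" "v' = 1/\<alpha> + 1" using r dist case_r by simp_all
    have "2 * (u - \<rho> * v) \<le> L * (1 - \<rho>)"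
      using r case_r assms by (intro A1_Weak_bound) (auto simp: fits_report_def)
    then show ?thesis unfolding uv'
      by (rule rescale_le[where k = "1/\<alpha> + 1"]) (use assms in \<open>simp_all add: field_simps\<close>)
  next
    assume case_r: "x = A1" "s = Strong"
    have uv': "u' = 2" "v' = 2/\<alpha>" using r dist case_r by simp_all
    have "(1 + \<alpha>) * (u - \<rho> * v) \<le> L * (\<alpha> - \<rho>)"
      using r case_r assms by (intro A1_Strong_bound) (auto simp: fits_report_def)
    then show ?thesis unfolding uv'
      by (rule rescale_le[where k = "2/\<alpha>"]) (use assms in \<open>simp_all add: field_simps\<close>)
  next
    assume "x = A2" "s = Weak"
    with r assms show ?thesis by simp
  next
    assume case_r: "x = A2" "s = Strong"
    have uv': "u' = 2/\<alpha> + 2" "v' = 0" using r dist case_r by simp_all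
    have "v \<le> \<rho> * v" using mult_right_mono[of 1 \<rho> v] assms by simp
    then have "1 * (u - \<rho> * v) \<le> L * 1" using assms by auto
    then show ?thesis unfolding uv'
      by (rule rescale_le[where k = "2/\<alpha> + 2"]) (use assms in \<open>simp_all add: field_simps\<close>)
  qed
  then show ?thesis unfolding u'_def v'_def .
qed

lemma agent_bound_placement1:
  fixes u v L \<rho> :: real
  assumes "0 < \<alpha>" "\<alpha> < 1" "1 \<le> \<rho>" "1 \<le> \<rho> * \<alpha>" "fits_report \<alpha> (\<sigma> i) u v"
    "0 \<le> u" "0 \<le> v" "L = u + v \<or> L = \<bar>u - v\<bar>"
  shows "(2/\<alpha> + 2) * (u - \<rho> * v) \<le>
    L * (edist (agpos1 \<alpha> \<sigma>) (altpos1 \<alpha>) i A1 - \<rho> * edist (agpos1 \<alpha> \<sigma>) (altpos1 \<alpha>) i A2)"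
proof (cases "\<sigma> i = (A2, Weak)")
  case True
  have dist: "edist (agpos1 \<alpha> \<sigma>) (altpos1 \<alpha>) i A1 = 2/\<alpha>" "edist (agpos1 \<alpha> \<sigma>) (altpos1 \<alpha>) i A2 = 2"
    using edist_placement1[OF assms(1,2), of \<sigma> i] True by simp_all
  have "(1 + \<alpha>) * (u - \<rho> * v) \<le> L * (1 - \<rho> * \<alpha>)"
    using assms True by (intro A2_Weak_bound_ge) (auto simp: fits_report_def)
  then show ?thesis unfolding dist
    by (rule rescale_le[where k = "2/\<alpha>"]) (use assms in \<open>simp_all add: field_simps\<close>)
next
  case False
  then show ?thesis using assms by (intro agent_bound_not_N2) auto
qed

lemma agent_bound_placement2:
  fixes u v L \<rho> :: real
  assumes "0 < \<alpha>" "\<alpha> < 1" "1 \<le> \<rho>" "\<rho> * \<alpha> \<le> 1" "fits_report \<alpha> (\<sigma> i) u v"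
    "0 \<le> u" "0 \<le> v" "L = u + v \<or> L = \<bar>u - v\<bar>"
  shows "(2/\<alpha> + 2) * (u - \<rho> * v) \<le>
    L * (edist (agpos2 \<alpha> \<sigma>) (altpos2 \<alpha>) i A1 - \<rho> * edist (agpos2 \<alpha> \<sigma>) (altpos2 \<alpha>) i A2)"
proof (cases "\<sigma> i = (A2, Weak)")
  case True
  define K where "K = (2/\<alpha> + 2) / (1 - \<alpha>)"
  have "(1 - \<alpha>) * (u - \<rho> * v) \<le> L * (1 - \<rho> * \<alpha>)"
    using assms True by (intro A2_Weak_bound_le) (auto simp: fits_report_def)
  moreover have "0 \<le> K" "K * (1 - \<alpha>) = 2/\<alpha> + 2" using assms by (simp_all add: K_def)
  ultimately show ?thesis
    unfolding edist_placement2_N2[where \<sigma> = \<sigma> and i = i, OF assms(1,2) True] K_def[symmetric]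
    by (rule rescale_le[where k = K]) (simp add: algebra_simps)
next
  case False
  then show ?thesis unfolding edist_placement2_not_N2[where \<sigma> = \<sigma> and i = i, OF False] using assms by (intro agent_bound_not_N2) auto
qed

lemma sc_le_by_agent_bounds:
  fixes D L \<rho> :: real
  assumes "0 < D" "0 \<le> L"
    "\<And>i. i \<in> N \<Longrightarrow> D * (edist q p i A1 - \<rho> * edist q p i A2) \<le> L * (edist q' p' i A1 - \<rho> * edist q' p' i A2)"
    "sc N q' p' A1 \<le> \<rho> * sc N q' p' A2"
  shows "sc N q p A1 \<le> \<rho> * sc N q p A2"
proof -
  have "D * (sc N q p A1 - \<rho> * sc N q p A2) = (\<Sum>i\<in>N. D * (edist q p i A1 - \<rho> * edist q p i A2))"
    by (simp add: sc_def sum_distrib_left sum_subtractf right_diff_distrib)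
  also have "\<dots> \<le> (\<Sum>i\<in>N. L * (edist q' p' i A1 - \<rho> * edist q' p' i A2))"
    by (rule sum_mono) (rule assms(3))
  also have "\<dots> = L * (sc N q' p' A1 - \<rho> * sc N q' p' A2)"
    by (simp add: sc_def sum_distrib_left sum_subtractf right_diff_distrib)
  also have "\<dots> \<le> 0" using assms(2,4) by (simp add: mult_nonneg_nonpos)
  finally show ?thesis using assms(1) by (simp add: mult_le_0_iff)
qed

lemma sc_le_of_placements:
  fixes \<rho> :: real
  assumes "0 < \<alpha>" "\<alpha> < 1" "1 \<le> \<rho>" "consistent \<alpha> N \<sigma> q p"
    "sc N (agpos1 \<alpha> \<sigma>) (altpos1 \<alpha>) A1 \<le> \<rho> * sc N (agpos1 \<alpha> \<sigma>) (altpos1 \<alpha>) A2"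
    "sc N (agpos2 \<alpha> \<sigma>) (altpos2 \<alpha>) A1 \<le> \<rho> * sc N (agpos2 \<alpha> \<sigma>) (altpos2 \<alpha>) A2"
  shows "sc N q p A1 \<le> \<rho> * sc N q p A2"
proof -
  define L where "L = \<bar>p A1 - p A2\<bar>"
  have agent: "fits_report \<alpha> (\<sigma> i) (edist q p i A1) (edist q p i A2)"
    "0 \<le> edist q p i A1" "0 \<le> edist q p i A2"
    "L = edist q p i A1 + edist q p i A2 \<or> L = \<bar>edist q p i A1 - edist q p i A2\<bar>" if "i \<in> N" for i
    using assms(4) that abs_diff_collinear[of "p A1" "p A2" "q i"]
    by (auto simp: consistent_iff_fits_report edist_def L_def)
  have "0 < 2/\<alpha> + 2" "0 \<le> L" using assms(1) by (simp_all add: L_def add_pos_pos)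
  note D_pos = \<open>0 < 2/\<alpha> + 2\<close> and L_nonneg = \<open>0 \<le> L\<close>
  show ?thesis
  proof (cases "1 \<le> \<rho> * \<alpha>")
    case True
    show ?thesis
    proof (rule sc_le_by_agent_bounds[OF D_pos L_nonneg _ assms(5)])
      fix i assume "i \<in> N"
      with agent assms True show "(2/\<alpha> + 2) * (edist q p i A1 - \<rho> * edist q p i A2) \<le>
          L * (edist (agpos1 \<alpha> \<sigma>) (altpos1 \<alpha>) i A1 - \<rho> * edist (agpos1 \<alpha> \<sigma>) (altpos1 \<alpha>) i A2)"
        by (intro agent_bound_placement1) auto
    qed
  next
    case False
    show ?thesis
    proof (rule sc_le_by_agent_bounds[OF D_pos L_nonneg _ assms(6)])
      fix i assume "i \<in> N"
      with agent assms False show "(2/\<alpha> + 2) * (edist q p i A1 - \<rho> * edist q p i A2) \<le>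
          L * (edist (agpos2 \<alpha> \<sigma>) (altpos2 \<alpha>) i A1 - \<rho> * edist (agpos2 \<alpha> \<sigma>) (altpos2 \<alpha>) i A2)"
        by (intro agent_bound_placement2) auto
    qed
  qed
qed

lemma sc_nonneg: "0 \<le> sc N q p a"
  unfolding sc_def edist_def by (simp add: sum_nonneg)

lemma sc_placements_A1_pos:
  assumes "0 < \<alpha>" "\<alpha> < 1" "finite N" "N \<noteq> {}"
  shows "0 < sc N (agpos1 \<alpha> \<sigma>) (altpos1 \<alpha>) A1" and "0 < sc N (agpos2 \<alpha> \<sigma>) (altpos2 \<alpha>) A1"
proof -
  have pos1: "0 < edist (agpos1 \<alpha> \<sigma>) (altpos1 \<alpha>) i A1" for i
    using edist_placement1[OF assms(1,2), of \<sigma> i] assms(1)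
    by (cases "\<sigma> i"; rename_tac x s; case_tac x; case_tac s) (auto simp: add_pos_pos)
  moreover have "0 < edist (agpos2 \<alpha> \<sigma>) (altpos2 \<alpha>) i A1" for i
    using pos1[of i] edist_placement2_N2(1)[where \<sigma> = \<sigma> and i = i, OF assms(1,2)]
      edist_placement2_not_N2[of \<sigma> i] assms(1,2)
    by (cases "\<sigma> i = (A2, Weak)") (auto simp: add_pos_pos)
  ultimately show "0 < sc N (agpos1 \<alpha> \<sigma>) (altpos1 \<alpha>) A1" "0 < sc N (agpos2 \<alpha> \<sigma>) (altpos2 \<alpha>) A1"
    unfolding sc_def using assms(3,4) by (auto intro: sum_pos)
qed

lemma ratio_min_le:
  fixes x y \<rho> :: real
  assumes "0 \<le> x" "0 \<le> y" "1 \<le> \<rho>" "x \<le> \<rho> * y"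
  shows "ratio x (min x y) \<le> ereal \<rho>"
proof (cases "x \<le> y")
  case True
  then show ?thesis using assms by (auto simp: ratio_def min_def)
next
  case False
  then have "0 < y" using assms by (cases "y = 0") auto
  then show ?thesis using assms False by (auto simp: ratio_def min_def pos_divide_le_eq)
qed

lemma ratio_le_placements:
  assumes "0 < \<alpha>" "\<alpha> < 1" "finite N" "N \<noteq> {}" "consistent \<alpha> N \<sigma> q p"
  shows "ratio (sc N q p A1) (min (sc N q p A1) (sc N q p A2)) \<le>
    max (ratio (sc N (agpos1 \<alpha> \<sigma>) (altpos1 \<alpha>) A1) (sc N (agpos1 \<alpha> \<sigma>) (altpos1 \<alpha>) A2))
     (max (ratio (sc N (agpos2 \<alpha> \<sigma>) (altpos2 \<alpha>) A1) (sc N (agpos2 \<alpha> \<sigma>) (altpos2 \<alpha>) A2)) 1)"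
    (is "_ \<le> max (ratio ?x1 ?y1) (max (ratio ?x2 ?y2) 1)")
proof (cases "?y1 = 0 \<or> ?y2 = 0")
  case True
  then show ?thesis using sc_placements_A1_pos[OF assms(1-4)] by (auto simp: ratio_def)
next
  case False
  then have pos: "0 < ?y1" "0 < ?y2" using sc_nonneg[of N] by (auto simp: less_le)
  define \<rho> where "\<rho> = max (?x1 / ?y1) (max (?x2 / ?y2) 1)"
  have "?x1 / ?y1 \<le> \<rho>" "?x2 / ?y2 \<le> \<rho>" "1 \<le> \<rho>" by (simp_all add: \<rho>_def)
  then have "sc N q p A1 \<le> \<rho> * sc N q p A2"
    using pos by (intro sc_le_of_placements[OF assms(1,2) \<open>1 \<le> \<rho>\<close> assms(5)])
                 (simp_all add: pos_divide_le_eq mult.commute)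
  then have "ratio (sc N q p A1) (min (sc N q p A1) (sc N q p A2)) \<le> ereal \<rho>"
    using \<open>1 \<le> \<rho>\<close> by (intro ratio_min_le sc_nonneg)
  also have "ereal \<rho> = max (ratio ?x1 ?y1) (max (ratio ?x2 ?y2) 1)"
    using pos by (simp add: \<rho>_def ratio_def one_ereal_def)
  finally show ?thesis .
qed

lemma ratio_le_distortion:
  "consistent \<alpha> N \<sigma> q p \<Longrightarrow>
    ratio (sc N q p A1) (min (sc N q p A1) (sc N q p A2)) \<le> distortion \<alpha> N \<sigma> A1"
  unfolding distortion_def by (rule SUP_upper2[of "(q, p)"]) auto

lemma divide_le_ratio_min:
  fixes x y :: real
  shows "0 \<le> x \<Longrightarrow> 0 \<le> y \<Longrightarrow> ereal (x / y) \<le> ratio x (min x y)"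
  by (auto simp: ratio_def min_def divide_le_eq_1)

lemma ratio_le_ratio_min:
  fixes x y :: real
  shows "0 < x \<Longrightarrow> 0 \<le> y \<Longrightarrow> ratio x y \<le> ratio x (min x y)"
  by (auto simp: ratio_def min_def divide_le_eq_1)

lemma one_le_ratio_min:
  fixes x y :: real
  shows "0 \<le> x \<Longrightarrow> 0 \<le> y \<Longrightarrow> 1 \<le> ratio x (min x y)"
  by (auto simp: ratio_def min_def)

(* Both placements put N2 where its strict constraint d(i,a2) > alpha d(i,a1) holds with equality;
   moving N2 to a nearby t gives consistent metrics converging to the placement. *)
definition move_N2 :: "('i \<Rightarrow> report) \<Rightarrow> ('i \<Rightarrow> real) \<Rightarrow> real \<Rightarrow> 'i \<Rightarrow> real" where
  "move_N2 \<sigma> q t i = (if \<sigma> i = (A2, Weak) then t else q i)"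

lemma edist_move_N2:
  "\<sigma> i = (A2, Weak) \<Longrightarrow> edist (move_N2 \<sigma> q t) p i a = \<bar>t - p a\<bar>"
  "\<sigma> i \<noteq> (A2, Weak) \<Longrightarrow> edist (move_N2 \<sigma> q t) p i a = edist q p i a"
  by (simp_all add: edist_def move_N2_def)

lemma sc_move_N2_tendsto:
  assumes "((\<lambda>t. t) \<longlongrightarrow> \<tau>) F" "\<And>i. \<sigma> i = (A2, Weak) \<Longrightarrow> q i = \<tau>"
  shows "((\<lambda>t. sc N (move_N2 \<sigma> q t) p a) \<longlongrightarrow> sc N q p a) F"
  unfolding sc_def
proof (rule tendsto_sum)
  fix i
  show "((\<lambda>t. edist (move_N2 \<sigma> q t) p i a) \<longlongrightarrow> edist q p i a) F"
  proof (cases "\<sigma> i = (A2, Weak)")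
    case True
    then have "edist q p i a = \<bar>\<tau> - p a\<bar>" using assms(2) by (simp add: edist_def)
    then show ?thesis using True assms(1) by (simp add: edist_move_N2 tendsto_intros)
  next
    case False
    then show ?thesis by (simp add: edist_move_N2)
  qed
qed

lemma ratio_le_distortion_of_limit:
  assumes "finite N" "F \<noteq> bot" "((\<lambda>t. t) \<longlongrightarrow> \<tau>) F"
    "eventually (\<lambda>t. consistent \<alpha> N \<sigma> (move_N2 \<sigma> q t) p) F"
    "\<And>i. \<sigma> i = (A2, Weak) \<Longrightarrow> q i = \<tau>" "\<tau> \<noteq> p A2" "0 < sc N q p A1"
  shows "ratio (sc N q p A1) (sc N q p A2) \<le> distortion \<alpha> N \<sigma> A1"
proof (cases "\<exists>i\<in>N. \<sigma> i = (A2, Weak)")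
  case True
  then obtain i where i: "i \<in> N" "\<sigma> i = (A2, Weak)" by blast
  have "0 < edist q p i A2" using assms(5,6) i by (simp add: edist_def)
  also have "\<dots> \<le> sc N q p A2"
    unfolding sc_def using assms(1) i(1) by (intro member_le_sum) (auto simp: edist_def)
  finally have y_pos: "0 < sc N q p A2" .
  have "((\<lambda>t. sc N (move_N2 \<sigma> q t) p A1 / sc N (move_N2 \<sigma> q t) p A2)
      \<longlongrightarrow> sc N q p A1 / sc N q p A2) F"
    using y_pos by (intro tendsto_divide sc_move_N2_tendsto[OF assms(3,5)]) auto
  then have "((\<lambda>t. ereal (sc N (move_N2 \<sigma> q t) p A1 / sc N (move_N2 \<sigma> q t) p A2))
      \<longlongrightarrow> ereal (sc N q p A1 / sc N q p A2)) F"
    by simp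
  moreover have "eventually (\<lambda>t.
      ereal (sc N (move_N2 \<sigma> q t) p A1 / sc N (move_N2 \<sigma> q t) p A2) \<le> distortion \<alpha> N \<sigma> A1) F"
    using assms(4)
    by eventually_elim (rule order_trans[OF divide_le_ratio_min ratio_le_distortion], simp_all add: sc_nonneg)
  ultimately have "ereal (sc N q p A1 / sc N q p A2) \<le> distortion \<alpha> N \<sigma> A1"
    using assms(2) by (rule tendsto_upperbound)
  then show ?thesis using y_pos by (simp add: ratio_def)
next
  case False
  obtain t where "consistent \<alpha> N \<sigma> (move_N2 \<sigma> q t) p" using eventually_happens'[OF assms(2,4)] by blast
  moreover have "sc N (move_N2 \<sigma> q t) p a = sc N q p a" for a
    unfolding sc_def using False by (intro sum.cong) (auto simp: edist_move_N2)
  ultimately have "ratio (sc N q p A1) (min (sc N q p A1) (sc N q p A2)) \<le> distortion \<alpha> N \<sigma> A1"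
    using ratio_le_distortion by metis
  then show ?thesis using assms(7) by (meson order_trans ratio_le_ratio_min sc_nonneg)
qed

lemma fits_placement1_not_N2:
  assumes "0 < \<alpha>" "\<alpha> < 1" "\<sigma> i \<noteq> (A2, Weak)"
  shows "fits_report \<alpha> (\<sigma> i) (edist (agpos1 \<alpha> \<sigma>) (altpos1 \<alpha>) i A1) (edist (agpos1 \<alpha> \<sigma>) (altpos1 \<alpha>) i A2)"
proof -
  have "\<alpha> * (1/\<alpha> + 1) = 1 + \<alpha>" "1 < 1/\<alpha>" "0 \<le> \<alpha> * (2/\<alpha> + 2)"
    using assms by (simp_all add: field_simps)
  then have "\<alpha> * (1/\<alpha> + 1) < 1/\<alpha> + 1" "0 \<le> \<alpha> * (2/\<alpha> + 2)" using assms by linarith+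
  then show ?thesis using edist_placement1[OF assms(1,2), of \<sigma> i] assms
    by (cases "\<sigma> i"; rename_tac x s; case_tac x; case_tac s) (auto simp: fits_report_def)
qed

lemma consistent_move_N2_placement1:
  assumes "0 < \<alpha>" "\<alpha> < 1" "1/\<alpha> + 1 \<le> t" "t < 2/\<alpha>"
  shows "consistent \<alpha> N \<sigma> (move_N2 \<sigma> (agpos1 \<alpha> \<sigma>) t) (altpos1 \<alpha>)"
  unfolding consistent_iff_fits_report
proof
  fix i
  show "fits_report \<alpha> (\<sigma> i) (edist (move_N2 \<sigma> (agpos1 \<alpha> \<sigma>) t) (altpos1 \<alpha>) i A1)
      (edist (move_N2 \<sigma> (agpos1 \<alpha> \<sigma>) t) (altpos1 \<alpha>) i A2)"
  proof (cases "\<sigma> i = (A2, Weak)")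
    case True
    have "\<alpha> * t < 2" using mult_strict_left_mono[OF assms(4,1)] assms(1) by simp
    moreover have "0 < 1/\<alpha>" using assms(1) by simp
    ultimately show ?thesis using True assms(3,4) by (simp add: edist_move_N2 altpos1_def fits_report_def)
  next
    case False
    then show ?thesis using fits_placement1_not_N2[where \<sigma> = \<sigma> and i = i, OF assms(1,2) False] by (simp add: edist_move_N2)
  qed
qed

lemma consistent_move_N2_placement2:
  assumes "0 < \<alpha>" "\<alpha> < 1" "2/\<alpha> + 2 + (2 * \<alpha> + 2) / (1 - \<alpha>) < t"
  shows "consistent \<alpha> N \<sigma> (move_N2 \<sigma> (agpos2 \<alpha> \<sigma>) t) (altpos2 \<alpha>)"
  unfolding consistent_iff_fits_report
proof
  fix i
  show "fits_report \<alpha> (\<sigma> i) (edist (move_N2 \<sigma> (agpos2 \<alpha> \<sigma>) t) (altpos2 \<alpha>) i A1)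
      (edist (move_N2 \<sigma> (agpos2 \<alpha> \<sigma>) t) (altpos2 \<alpha>) i A2)"
  proof (cases "\<sigma> i = (A2, Weak)")
    case True
    have "(2/\<alpha> + 2 + (2 * \<alpha> + 2) / (1 - \<alpha>)) * (1 - \<alpha>) = 2/\<alpha> + 2"
      using assms(1,2) by (simp add: field_simps)
    moreover have "(2/\<alpha> + 2 + (2 * \<alpha> + 2) / (1 - \<alpha>)) * (1 - \<alpha>) < t * (1 - \<alpha>)"
      using assms by (intro mult_strict_right_mono) auto
    ultimately have key: "\<alpha> * t < t - (2/\<alpha> + 2)" by (simp add: algebra_simps)
    have "0 < 2/\<alpha>" "0 < (2 * \<alpha> + 2) / (1 - \<alpha>)" using assms(1,2) by simp_all
    then have "0 < t" "2/\<alpha> + 2 < t" using assms(3) by linarith+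
    then have "edist (move_N2 \<sigma> (agpos2 \<alpha> \<sigma>) t) (altpos2 \<alpha>) i A1 = t"
      "edist (move_N2 \<sigma> (agpos2 \<alpha> \<sigma>) t) (altpos2 \<alpha>) i A2 = t - (2/\<alpha> + 2)"
      using True assms(3) by (simp_all add: edist_move_N2 altpos2_def)
    moreover have "t - (2/\<alpha> + 2) \<le> t" using \<open>0 < 2/\<alpha>\<close> by linarith
    ultimately show ?thesis using True key by (simp add: fits_report_def)
  next
    case False
    then show ?thesis using fits_placement1_not_N2[where \<sigma> = \<sigma> and i = i, OF assms(1,2) False]
      by (simp add: edist_move_N2 edist_placement2_not_N2)
  qed
qed

lemma ratio_placement1_le_distortion:
  assumes "0 < \<alpha>" "\<alpha> < 1" "finite N" "N \<noteq> {}"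
  shows "ratio (sc N (agpos1 \<alpha> \<sigma>) (altpos1 \<alpha>) A1) (sc N (agpos1 \<alpha> \<sigma>) (altpos1 \<alpha>) A2)
    \<le> distortion \<alpha> N \<sigma> A1"
proof (rule ratio_le_distortion_of_limit[where F = "at_left (2/\<alpha>)" and \<tau> = "2/\<alpha>"])
  have "1/\<alpha> + 1 < 2/\<alpha>" using assms(1,2) by (simp add: field_simps)
  from eventually_at_left_real[OF this]
  show "\<forall>\<^sub>F t in at_left (2/\<alpha>). consistent \<alpha> N \<sigma> (move_N2 \<sigma> (agpos1 \<alpha> \<sigma>) t) (altpos1 \<alpha>)"
    by eventually_elim (use assms(1,2) in \<open>auto intro: consistent_move_N2_placement1\<close>)
qed (use assms sc_placements_A1_pos[OF assms] in \<open>auto simp: agpos1_def altpos1_def\<close>)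

lemma ratio_placement2_le_distortion:
  assumes "0 < \<alpha>" "\<alpha> < 1" "finite N" "N \<noteq> {}"
  shows "ratio (sc N (agpos2 \<alpha> \<sigma>) (altpos2 \<alpha>) A1) (sc N (agpos2 \<alpha> \<sigma>) (altpos2 \<alpha>) A2)
    \<le> distortion \<alpha> N \<sigma> A1"
proof -
  define T where "T = 2/\<alpha> + 2 + (2 * \<alpha> + 2) / (1 - \<alpha>)"
  have "0 < 2/\<alpha>" "0 < (2 * \<alpha> + 2) / (1 - \<alpha>)" using assms(1,2) by simp_all
  then have "2/\<alpha> + 2 < T" by (simp add: T_def)
  show ?thesis
  proof (rule ratio_le_distortion_of_limit[where F = "at_right T" and \<tau> = T])
    show "\<forall>\<^sub>F t in at_right T. consistent \<alpha> N \<sigma> (move_N2 \<sigma> (agpos2 \<alpha> \<sigma>) t) (altpos2 \<alpha>)"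
      using eventually_at_right_real[OF less_add_one[of T]]
      by eventually_elim (use assms(1,2) in \<open>auto simp: T_def intro: consistent_move_N2_placement2\<close>)
  qed (use assms sc_placements_A1_pos[OF assms] \<open>2/\<alpha> + 2 < T\<close> in \<open>auto simp: agpos2_def altpos2_def T_def\<close>)
qed

lemma one_le_distortion:
  assumes "0 < \<alpha>" "\<alpha> < 1"
  shows "1 \<le> distortion \<alpha> N \<sigma> A1"
  using consistent_move_N2_placement1[OF assms, of "1/\<alpha> + 1"] assms
  by (intro order_trans[OF one_le_ratio_min ratio_le_distortion] sc_nonneg) (auto simp: field_simps)

theorem lemma5:
  fixes \<alpha> :: real and N :: "'i set" and \<sigma> :: "'i \<Rightarrow> report"
  assumes "0 < \<alpha>" "\<alpha> < 1" "finite N" "N \<noteq> {}"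
  shows "distortion \<alpha> N \<sigma> A1 =
    max (ratio (sc N (agpos1 \<alpha> \<sigma>) (altpos1 \<alpha>) A1) (sc N (agpos1 \<alpha> \<sigma>) (altpos1 \<alpha>) A2))
     (max (ratio (sc N (agpos2 \<alpha> \<sigma>) (altpos2 \<alpha>) A1) (sc N (agpos2 \<alpha> \<sigma>) (altpos2 \<alpha>) A2))
          1)"
  using ratio_le_placements[OF assms] ratio_placement1_le_distortion[OF assms]
    ratio_placement2_le_distortion[OF assms] one_le_distortion[OF assms(1,2)]
  unfolding distortion_def by (intro antisym SUP_least) (auto simp: case_prod_beta)

end
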